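(* Let $T$ be a tree and let $f_0,f_t$ be token-placements of $T$ with colors $\{1,2\}$ having the same number of color-1 tokens. For an edge $e=xy$ let $T(x)$ be the component of $T-e$ containing $x$ and $\mathrm{diff}(e)=\bigl|\,|\{v\in T(x): f_0(v)=1\}|-|\{v\in T(x): f_t(v)=1\}|\,\bigr|$. Then $\mathrm{OPT}(f_0,f_t)=\sum_{e\in E(T)}\mathrm{diff}(e)$.
   Context: A token-placement of a graph $G=(V,E)$ with colors $C=\{1,\dots,c\}$ is a surjective map $f\colon V\to C$. Two distinct token-placements $f,f'$ are adjacent if there is an edge $uv\in E$ with $f'(u)=f(v)$, $f'(v)=f(u)$ and $f'(w)=f(w)$ for all other $w$. A swapping sequence between $f$ and $f'$ is a sequence $f_1=f,\dots,f_h=f'$ of token-placements with consecutive members adjacent; its length is $h-1$. $\mathrm{OPT}(f,f')$ is the minimum length of such a sequence. *)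

theory Defs
  imports Main
begin

definition simple_graph :: "'a set \<Rightarrow> 'a set set \<Rightarrow> bool" where
  "simple_graph V E \<longleftrightarrow> finite V \<and>
     (\<forall>e\<in>E. \<exists>u v. e = {u, v} \<and> u \<noteq> v \<and> u \<in> V \<and> v \<in> V)"

definition connected_graph :: "'a set \<Rightarrow> 'a set set \<Rightarrow> bool" where
  "connected_graph V E \<longleftrightarrow> (\<forall>u\<in>V. \<forall>v\<in>V. (\<lambda>a b. {a, b} \<in> E)\<^sup>*\<^sup>* u v)"

definition has_cycle :: "'a set set \<Rightarrow> bool" where
  "has_cycle E \<longleftrightarrow> (\<exists>vs. length vs \<ge> 3 \<and> distinct vs \<and>
       (\<forall>i. Suc i < length vs \<longrightarrow> {vs ! i, vs ! Suc i} \<in> E) \<and>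
       {last vs, hd vs} \<in> E)"

definition is_tree :: "'a set \<Rightarrow> 'a set set \<Rightarrow> bool" where
  "is_tree V E \<longleftrightarrow> simple_graph V E \<and> V \<noteq> {} \<and> connected_graph V E \<and> \<not> has_cycle E"

(* token placement with colours {1..c}: surjective map V -> {1..c}
   (made extensional: value 0 outside V) *)
definition token_placement :: "'a set \<Rightarrow> nat \<Rightarrow> ('a \<Rightarrow> nat) \<Rightarrow> bool" where
  "token_placement V c f \<longleftrightarrow> f ` V = {1..c} \<and> (\<forall>w. w \<notin> V \<longrightarrow> f w = 0)"

definition tp_adjacent :: "'a set set \<Rightarrow> ('a \<Rightarrow> nat) \<Rightarrow> ('a \<Rightarrow> nat) \<Rightarrow> bool" where
  "tp_adjacent E f f' \<longleftrightarrow> f \<noteq> f' \<and>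
     (\<exists>u v. {u, v} \<in> E \<and> f' u = f v \<and> f' v = f u \<and> (\<forall>w. w \<noteq> u \<and> w \<noteq> v \<longrightarrow> f' w = f w))"

(* swapping sequence f_1 = f, ..., f_h = f' (as a nonempty list); its length is h - 1 *)
definition swap_seq :: "'a set \<Rightarrow> nat \<Rightarrow> 'a set set \<Rightarrow> ('a \<Rightarrow> nat) \<Rightarrow> ('a \<Rightarrow> nat)
    \<Rightarrow> ('a \<Rightarrow> nat) list \<Rightarrow> bool" where
  "swap_seq V c E f f' fs \<longleftrightarrow> fs \<noteq> [] \<and> hd fs = f \<and> last fs = f' \<and>
     (\<forall>g\<in>set fs. token_placement V c g) \<and>
     (\<forall>i. Suc i < length fs \<longrightarrow> tp_adjacent E (fs ! i) (fs ! Suc i))"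

definition OPT :: "'a set \<Rightarrow> nat \<Rightarrow> 'a set set \<Rightarrow> ('a \<Rightarrow> nat) \<Rightarrow> ('a \<Rightarrow> nat) \<Rightarrow> nat" where
  "OPT V c E f f' = (LEAST n. \<exists>fs. swap_seq V c E f f' fs \<and> length fs = Suc n)"

definition comp_minus :: "'a set \<Rightarrow> 'a set set \<Rightarrow> 'a set \<Rightarrow> 'a \<Rightarrow> 'a set" where
  "comp_minus V E e x = {v \<in> V. (\<lambda>a b. {a, b} \<in> E - {e})\<^sup>*\<^sup>* x v}"

definition diff_edge :: "'a set \<Rightarrow> 'a set set \<Rightarrow> ('a \<Rightarrow> nat) \<Rightarrow> ('a \<Rightarrow> nat) \<Rightarrow> 'a set \<Rightarrow> nat" where
  "diff_edge V E f0 ft e = (let x = (SOME x. x \<in> e); Tx = comp_minus V E e x in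
     nat \<bar>int (card {v \<in> Tx. f0 v = 1}) - int (card {v \<in> Tx. ft v = 1})\<bar>)"

end

theory Submission
  imports Defs
begin

text \<open>A swap along an edge \<open>uv\<close> changes the number of 1-tokens only inside the two
  components of \<open>T - uv\<close>, and there by at most one; so it changes \<open>diff\<close> only on \<open>uv\<close>, by at
  most one, and every swapping sequence has length at least \<open>\<Sum>e. diff(e)\<close>.
  Conversely, if the placement differs from the target, start at a vertex carrying a misplaced
  1 and follow a deficit of 1-tokens down into ever smaller branches of the tree. This ends at
  an edge \<open>xy\<close> with \<open>f(x) = 1\<close>, \<open>f(y) = 2\<close> whose \<open>y\<close>-side has too few 1-tokens; swapping
  \<open>x\<close> and \<open>y\<close> lowers \<open>diff(xy)\<close> by one and fixes all other values of \<open>diff\<close>, so induction on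
  \<open>\<Sum>e. diff(e)\<close> yields a swapping sequence of exactly that length.\<close>

lemma rtranclp_imp_distinct_path:
  assumes "r\<^sup>*\<^sup>* x w"
  shows "\<exists>vs. vs \<noteq> [] \<and> hd vs = x \<and> last vs = w \<and> distinct vs \<and>
           (\<forall>i. Suc i < length vs \<longrightarrow> r (vs ! i) (vs ! Suc i))"
  using assms
proof (induction rule: rtranclp_induct)
  case base
  show ?case by (intro exI[of _ "[x]"]) auto
next
  case (step v w)
  then obtain vs where vs: "vs \<noteq> []" "hd vs = x" "last vs = v" "distinct vs"
    "\<forall>i. Suc i < length vs \<longrightarrow> r (vs ! i) (vs ! Suc i)" by blast
  show ?case
  proof (cases "w \<in> set vs")
    case True
    then obtain i where i: "i < length vs" "vs ! i = w" by (auto simp: in_set_conv_nth)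
    show ?thesis
    proof (intro exI[of _ "take (Suc i) vs"] conjI allI impI)
      show "last (take (Suc i) vs) = w" using i by (simp add: take_Suc_conv_app_nth)
    qed (use vs in auto)
  next
    case False
    have "r ((vs @ [w]) ! j) ((vs @ [w]) ! Suc j)" if "Suc j < length (vs @ [w])" for j
    proof (cases "Suc j < length vs")
      case True
      then show ?thesis using vs(5) by (simp add: nth_append)
    next
      case False
      then have "j = length vs - 1" using that by simp
      then show ?thesis using vs(1,3) step.hyps(2) by (simp add: nth_append last_conv_nth)
    qed
    then show ?thesis using vs False by (intro exI[of _ "vs @ [w]"]) auto
  qed
qed

lemma edge_rtranclp_sym:
  "(\<lambda>a b. {a, b} \<in> F)\<^sup>*\<^sup>* a b \<Longrightarrow> (\<lambda>a b. {a, b} \<in> F)\<^sup>*\<^sup>* b a"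
  by (rule sympD[OF symp_rtranclp]) (auto intro: sympI simp: insert_commute)

lemma acyclic_no_detour:
  assumes "\<not> has_cycle E" and "{x, y} \<in> E" and "x \<noteq> y"
  shows "\<not> (\<lambda>a b. {a, b} \<in> E - {{x, y}})\<^sup>*\<^sup>* x y"
proof
  assume "(\<lambda>a b. {a, b} \<in> E - {{x, y}})\<^sup>*\<^sup>* x y"
  from rtranclp_imp_distinct_path[OF this] obtain vs
    where vs: "vs \<noteq> []" "hd vs = x" "last vs = y" "distinct vs"
    and steps: "\<forall>i. Suc i < length vs \<longrightarrow> {vs ! i, vs ! Suc i} \<in> E - {{x, y}}"
    by blast
  have ends: "vs ! 0 = x" "vs ! (length vs - 1) = y"
    using vs(1-3) by (simp_all add: hd_conv_nth last_conv_nth)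
  have "length vs \<noteq> 1" using ends \<open>x \<noteq> y\<close> by auto
  moreover have "length vs \<noteq> 2"
  proof
    assume "length vs = 2"
    then have "{vs ! 0, vs ! 1} \<in> E - {{x, y}}" using steps by simp
    then show False using ends \<open>length vs = 2\<close> by simp
  qed
  moreover have "length vs \<noteq> 0" using vs(1) by simp
  ultimately have "length vs \<ge> 3" by linarith
  moreover have "{last vs, hd vs} \<in> E" using vs(2,3) assms(2) by (simp add: insert_commute)
  ultimately have "has_cycle E" unfolding has_cycle_def using vs(4) steps by blast
  then show False using assms(1) by contradiction
qed

definition ones :: "('a \<Rightarrow> nat) \<Rightarrow> 'a set \<Rightarrow> nat" where
  "ones g S = card {w \<in> S. g w = 1}"

lemma ones_eq_sum: "finite S \<Longrightarrow> ones g S = (\<Sum>w\<in>S. of_bool (g w = 1))"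
  unfolding ones_def by (simp add: Int_def)

lemma ones_remove: "finite S \<Longrightarrow> u \<in> S \<Longrightarrow> ones g S = of_bool (g u = 1) + ones g (S - {u})"
  by (simp add: ones_eq_sum sum.remove del: sum_of_bool_eq)

lemma ones_swap_outside:
  "u \<notin> S \<Longrightarrow> v \<notin> S \<Longrightarrow> ones (g(u := g v, v := g u)) S = ones g S"
  unfolding ones_def by (rule arg_cong[of _ _ card]) auto

lemma ones_swap_inside:
  assumes "finite S" and "u \<in> S" and "v \<in> S"
  shows "ones (g(u := g v, v := g u)) S = ones g S"
proof (cases "u = v")
  case False
  have "ones h S = of_bool (h u = 1) + of_bool (h v = 1) + ones h (S - {u} - {v})" for h
    using assms False by (simp add: ones_remove[of S u] ones_remove[of "S - {u}" v])
  then show ?thesis using ones_swap_outside[of u "S - {u} - {v}" v g] False by simp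
qed simp

lemma ones_swap_le:
  assumes "finite S" and "u \<notin> S \<or> v \<notin> S"
  shows "ones (g(u := g v, v := g u)) S \<le> ones g S + 1"
proof -
  define p where "p = (if u \<in> S then u else v)"
  have "{w \<in> S. (g(u := g v, v := g u)) w = 1} \<subseteq> insert p {w \<in> S. g w = 1}"
    using assms(2) by (auto simp: p_def)
  then have "ones (g(u := g v, v := g u)) S \<le> card (insert p {w \<in> S. g w = 1})"
    unfolding ones_def by (rule card_mono[rotated]) (simp add: assms(1))
  also have "\<dots> \<le> ones g S + 1"
    unfolding ones_def by (simp add: card_insert_if assms(1))
  finally show ?thesis .
qed

lemma token_placement_swap:
  assumes "token_placement V c g" and "u \<in> V" and "v \<in> V"
  shows "token_placement V c (g(u := g v, v := g u))"
proof -
  have "(g(u := g v, v := g u)) ` V = g ` V"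
    using assms(2,3) by (auto simp: image_iff)
  then show ?thesis using assms by (auto simp: token_placement_def)
qed

lemma tp_adjacent_swap: "{u, v} \<in> E \<Longrightarrow> g u \<noteq> g v \<Longrightarrow> tp_adjacent E g (g(u := g v, v := g u))"
  unfolding tp_adjacent_def by (rule conjI, metis fun_upd_same, fastforce)

lemma tp_adjacentE:
  assumes "tp_adjacent E g g'"
  obtains u v where "{u, v} \<in> E" and "g' = g(u := g v, v := g u)"
proof -
  from assms obtain u v where "{u, v} \<in> E" "g' u = g v" "g' v = g u"
    and "\<forall>w. w \<noteq> u \<and> w \<noteq> v \<longrightarrow> g' w = g w"
    unfolding tp_adjacent_def by blast
  then show thesis using that by (auto simp: fun_eq_iff)
qed

lemma swap_seq_single: "token_placement V c f \<Longrightarrow> swap_seq V c E f f [f]"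
  by (simp add: swap_seq_def)

lemma swap_seq_Cons:
  assumes "swap_seq V c E g' f fs" and "tp_adjacent E g g'" and "token_placement V c g"
  shows "swap_seq V c E g f (g # fs)"
proof -
  have "tp_adjacent E ((g # fs) ! i) ((g # fs) ! Suc i)" if "Suc i < length (g # fs)" for i
    using assms that by (cases i) (auto simp: swap_seq_def hd_conv_nth)
  then show ?thesis using assms by (auto simp: swap_seq_def)
qed

lemma swap_seq_ConsD:
  assumes "swap_seq V c E g f (g0 # g' # fs)"
  shows "tp_adjacent E g g'" and "swap_seq V c E g' f (g' # fs)"
proof -
  have adj: "tp_adjacent E ((g0 # g' # fs) ! i) ((g0 # g' # fs) ! Suc i)"
    if "Suc i < length (g0 # g' # fs)" for i
    using assms that unfolding swap_seq_def by blast
  show "tp_adjacent E g g'" using adj[of 0] assms by (simp add: swap_seq_def)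
  show "swap_seq V c E g' f (g' # fs)"
    using assms adj[of "Suc i" for i] unfolding swap_seq_def by auto
qed

lemma OPT_eqI:
  assumes "swap_seq V c E f f' fs" and "length fs = Suc n"
    and "\<And>fs. swap_seq V c E f f' fs \<Longrightarrow> n < length fs"
  shows "OPT V c E f f' = n"
  unfolding OPT_def
proof (rule Least_equality)
  show "\<exists>fs. swap_seq V c E f f' fs \<and> length fs = Suc n" using assms(1,2) by blast
  show "n \<le> m" if "\<exists>fs. swap_seq V c E f f' fs \<and> length fs = Suc m" for m
    using that assms(3) by fastforce
qed

lemma two_colour_values:
  assumes "token_placement V 2 g" and "w \<in> V"
  shows "g w = 1 \<or> g w = 2"
proof -
  have "g w \<in> {1..2}" using assms by (auto simp: token_placement_def)
  then show ?thesis by auto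
qed

lemma exists_misplaced_one:
  assumes "finite V" and g: "token_placement V 2 g" and h: "token_placement V 2 h"
    and "ones g V = ones h V" and "g \<noteq> h"
  obtains v where "v \<in> V" and "g v = 1" and "h v \<noteq> 1"
proof (rule ccontr)
  assume "\<not> thesis"
  then have sub: "{w \<in> V. g w = 1} \<subseteq> {w \<in> V. h w = 1}" using that by blast
  have ones_eq: "{w \<in> V. g w = 1} = {w \<in> V. h w = 1}"
    using card_subset_eq[OF _ sub] assms(1,4) by (simp add: ones_def)
  have "g w = h w" for w
  proof (cases "w \<in> V")
    case True
    then have "g w = 1 \<longleftrightarrow> h w = 1" using ones_eq by blast
    then show ?thesis using two_colour_values[OF g True] two_colour_values[OF h True] by auto
  next
    case False
    then show ?thesis using g h by (simp add: token_placement_def)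
  qed
  then show False using \<open>g \<noteq> h\<close> by blast
qed

section \<open>Branches of a tree\<close>

locale tree_graph =
  fixes V :: "'a set" and E :: "'a set set"
  assumes is_tree: "is_tree V E"
begin

abbreviation branch :: "'a \<Rightarrow> 'a \<Rightarrow> 'a set" where
  "branch x y \<equiv> comp_minus V E {x, y} x"

lemma finite_V: "finite V"
  using is_tree by (simp add: is_tree_def simple_graph_def)

lemma edge_cases:
  assumes "e \<in> E"
  obtains u v where "e = {u, v}" and "u \<noteq> v" and "u \<in> V" and "v \<in> V"
  using is_tree assms that unfolding is_tree_def simple_graph_def by blast

lemma edge_endpoints:
  assumes "{x, y} \<in> E"
  shows "x \<in> V" and "y \<in> V" and "x \<noteq> y"
  using assms by (auto elim!: edge_cases simp: doubleton_eq_iff)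

lemma finite_E: "finite E"
proof (rule finite_subset)
  show "E \<subseteq> Pow V" by (auto elim: edge_cases)
qed (simp add: finite_V)

lemma connected: "u \<in> V \<Longrightarrow> v \<in> V \<Longrightarrow> (\<lambda>a b. {a, b} \<in> E)\<^sup>*\<^sup>* u v"
  using is_tree by (auto simp: is_tree_def connected_graph_def)

lemma exists_neighbour:
  assumes "v \<in> V" and "w \<in> V" and "v \<noteq> w"
  obtains y where "{v, y} \<in> E"
  using connected[OF assms(1,2)] assms(3) that by (cases rule: converse_rtranclpE) auto

lemma comp_minus_subset: "comp_minus V E e p \<subseteq> V"
  by (auto simp: comp_minus_def)

lemma finite_comp_minus: "finite (comp_minus V E e p)"
  using finite_subset[OF comp_minus_subset finite_V] .

lemma comp_minus_closed:
  "a \<in> comp_minus V E e p \<Longrightarrow> {a, b} \<in> E \<Longrightarrow> {a, b} \<noteq> e \<Longrightarrow> b \<in> comp_minus V E e p"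
  unfolding comp_minus_def using edge_endpoints(2) by (auto intro: rtranclp.rtrancl_into_rtrancl)

lemma in_branch: "{x, y} \<in> E \<Longrightarrow> x \<in> branch x y"
  by (simp add: comp_minus_def edge_endpoints)

lemma not_in_branch:
  assumes "{x, y} \<in> E"
  shows "y \<notin> branch x y"
proof
  assume "y \<in> branch x y"
  then have "(\<lambda>a b. {a, b} \<in> E - {{x, y}})\<^sup>*\<^sup>* x y" unfolding comp_minus_def by blast
  then show False
    using acyclic_no_detour[OF _ assms edge_endpoints(3)[OF assms]] is_tree
    unfolding is_tree_def by blast
qed

lemma branch_disjoint:
  assumes "{x, y} \<in> E"
  shows "branch x y \<inter> branch y x = {}"
proof (rule ccontr)
  assume "branch x y \<inter> branch y x \<noteq> {}"
  then obtain w where xw: "(\<lambda>a b. {a, b} \<in> E - {{x, y}})\<^sup>*\<^sup>* x w"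
    and yw: "(\<lambda>a b. {a, b} \<in> E - {{x, y}})\<^sup>*\<^sup>* y w"
    by (auto simp: comp_minus_def insert_commute)
  have "(\<lambda>a b. {a, b} \<in> E - {{x, y}})\<^sup>*\<^sup>* x y"
    using rtranclp_trans[OF xw edge_rtranclp_sym[OF yw]] .
  then have "y \<in> branch x y"
    using edge_endpoints(2)[OF assms] unfolding comp_minus_def by blast
  then show False using not_in_branch[OF assms] by contradiction
qed

lemma branch_complement:
  assumes "{x, y} \<in> E"
  shows "branch y x = V - branch x y"
proof -
  have "w \<in> branch x y \<or> w \<in> branch y x" if "w \<in> V" for w
    using connected[OF edge_endpoints(1)[OF assms] that]
  proof (induction rule: rtranclp_induct)
    case base
    show ?case using in_branch[OF assms] by blast
  next
    case (step v u)
    show ?case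
    proof (cases "{v, u} = {x, y}")
      case True
      then show ?thesis using in_branch[OF assms] in_branch[of y x] assms
        by (auto simp: insert_commute doubleton_eq_iff)
    next
      case False
      then show ?thesis using step comp_minus_closed[of v "{x, y}"] comp_minus_closed[of v "{y, x}"]
        by (auto simp: insert_commute)
    qed
  qed
  then show ?thesis
    using branch_disjoint[OF assms] by (auto simp: comp_minus_def)
qed

lemma branch_subset:
  assumes xy: "{x, y} \<in> E" and yz: "{y, z} \<in> E" and "z \<noteq> x"
  shows "branch z y \<subseteq> branch y x"
proof
  fix w assume "w \<in> branch z y"
  then have "w \<in> V" and "(\<lambda>a b. {a, b} \<in> E - {{z, y}})\<^sup>*\<^sup>* z w"
    by (auto simp: comp_minus_def)
  from this(2) have "w \<in> branch y x"
  proof (induction rule: rtranclp_induct)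
    case base
    have "{y, z} \<noteq> {y, x}" using \<open>z \<noteq> x\<close> by (auto simp: doubleton_eq_iff)
    then show ?case
      using comp_minus_closed[OF in_branch[of y x]] xy yz by (simp add: insert_commute)
  next
    case (step v u)
    have "{v, u} \<noteq> {y, x}"
    proof
      assume "{v, u} = {y, x}"
      moreover have "(\<lambda>a b. {a, b} \<in> E - {{z, y}})\<^sup>*\<^sup>* z u"
        using step.hyps by (rule rtranclp.rtrancl_into_rtrancl)
      ultimately have "(\<lambda>a b. {a, b} \<in> E - {{z, y}})\<^sup>*\<^sup>* z y"
        using step.hyps(1) by (auto simp: doubleton_eq_iff)
      then have "y \<in> branch z y"
        using edge_endpoints(1)[OF yz] unfolding comp_minus_def by blast
      then show False using not_in_branch[of z y] yz by (simp add: insert_commute)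
    qed
    then show ?case using step comp_minus_closed by blast
  qed
  then show "w \<in> branch y x" .
qed

lemma branch_decomp:
  assumes xy: "{x, y} \<in> E"
  shows "branch y x = insert y (\<Union>z \<in> {z. {y, z} \<in> E \<and> z \<noteq> x}. branch z y)"
    (is "_ = insert y ?U")
proof
  show "insert y ?U \<subseteq> branch y x"
    using in_branch[of y x] xy branch_subset[OF xy] by (auto simp: insert_commute)
  show "branch y x \<subseteq> insert y ?U"
  proof
    fix w assume "w \<in> branch y x"
    then have "(\<lambda>a b. {a, b} \<in> E - {{y, x}})\<^sup>*\<^sup>* y w" by (simp add: comp_minus_def)
    then show "w \<in> insert y ?U"
    proof (induction rule: rtranclp_induct)
      case (step v u)
      then have vu: "{v, u} \<in> E" "{v, u} \<noteq> {y, x}" by auto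
      from step.IH show ?case
      proof
        assume "v = y"
        then show ?case using vu in_branch[of u y] by (auto simp: insert_commute)
      next
        assume "v \<in> ?U"
        then obtain z where z: "{y, z} \<in> E" "z \<noteq> x" "v \<in> branch z y" by blast
        show ?case
        proof (cases "{v, u} = {z, y}")
          case True
          then show ?thesis using z in_branch[of z y] by (auto simp: insert_commute doubleton_eq_iff)
        next
          case False
          then show ?thesis using comp_minus_closed[OF z(3) vu(1)] z by blast
        qed
      qed
    qed simp
  qed
qed

lemma ones_branch_complement:
  assumes "{x, y} \<in> E"
  shows "ones g (branch y x) + ones g (branch x y) = ones g V"
proof -
  have "{w \<in> V. g w = 1} = {w \<in> branch y x. g w = 1} \<union> {w \<in> branch x y. g w = 1}"
    and "{w \<in> branch y x. g w = 1} \<inter> {w \<in> branch x y. g w = 1} = {}"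
    using branch_complement[OF assms] comp_minus_subset by blast+
  then show ?thesis
    unfolding ones_def by (simp add: card_Un_disjoint finite_comp_minus)
qed

lemma ones_branch_decomp:
  assumes xy: "{x, y} \<in> E"
  shows "ones g (branch y x) =
    of_bool (g y = 1) + (\<Sum>z \<in> {z. {y, z} \<in> E \<and> z \<noteq> x}. ones g (branch z y))"
proof -
  let ?N = "{z. {y, z} \<in> E \<and> z \<noteq> x}"
  have "finite ?N"
    using finite_subset[OF _ finite_V, of ?N] edge_endpoints(2) by blast
  moreover have "branch z1 y \<inter> branch z2 y = {}" if "z1 \<in> ?N" "z2 \<in> ?N" "z1 \<noteq> z2" for z1 z2
    using that branch_subset[of z1 y z2] branch_disjoint[of z1 y] by (auto simp: insert_commute)
  ultimately have "ones g (\<Union>z \<in> ?N. branch z y) = (\<Sum>z \<in> ?N. ones g (branch z y))"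
    by (simp add: ones_eq_sum finite_comp_minus sum.UNION_disjoint del: sum_of_bool_eq)
  moreover have "y \<notin> (\<Union>z \<in> ?N. branch z y)"
    using not_in_branch by (auto simp: insert_commute)
  ultimately show ?thesis
    using \<open>finite ?N\<close> branch_decomp[OF xy]
    by (simp add: ones_remove[of _ y] finite_comp_minus)
qed

section \<open>The lower bound\<close>

abbreviation total_diff :: "('a \<Rightarrow> nat) \<Rightarrow> ('a \<Rightarrow> nat) \<Rightarrow> nat" where
  "total_diff g h \<equiv> \<Sum>e\<in>E. diff_edge V E g h e"

lemma diff_edge_ones:
  "diff_edge V E g h e = nat \<bar>int (ones g (comp_minus V E e (SOME x. x \<in> e)))
     - int (ones h (comp_minus V E e (SOME x. x \<in> e)))\<bar>"
  by (simp add: diff_edge_def ones_def Let_def)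

text \<open>The endpoint chosen by \<open>SOME\<close> is irrelevant: the two branches of an edge have
  complementary counts, and \<open>g\<close> and \<open>h\<close> have the same total count.\<close>

lemma diff_edge_branch:
  assumes e: "{a, b} \<in> E" and "ones g V = ones h V"
  shows "diff_edge V E g h {a, b} = nat \<bar>int (ones g (branch a b)) - int (ones h (branch a b))\<bar>"
proof -
  have "(SOME p. p \<in> {a, b}) \<in> {a, b}" by (rule someI[of _ a]) simp
  then consider "(SOME p. p \<in> {a, b}) = a" | "(SOME p. p \<in> {a, b}) = b" by blast
  then show ?thesis
  proof cases
    case 1
    then show ?thesis by (simp add: diff_edge_ones)
  next
    case 2
    have "diff_edge V E g h {a, b} = nat \<bar>int (ones g (branch b a)) - int (ones h (branch b a))\<bar>"
      unfolding diff_edge_ones 2 by (simp only: insert_commute)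
    moreover have "int (ones k (branch b a)) = int (ones k V) - int (ones k (branch a b))" for k
      using ones_branch_complement[OF e, of k] by linarith
    ultimately show ?thesis using assms(2) by simp
  qed
qed

lemma diff_edge_self: "diff_edge V E h h e = 0"
  by (simp add: diff_edge_ones)

lemma diff_edge_swap_other:
  assumes "{u, v} \<in> E" and "e \<noteq> {u, v}"
  shows "diff_edge V E (g(u := g v, v := g u)) h e = diff_edge V E g h e"
proof -
  let ?S = "comp_minus V E e (SOME x. x \<in> e)"
  have "u \<in> ?S \<longleftrightarrow> v \<in> ?S"
    using comp_minus_closed[of u e _ v] comp_minus_closed[of v e _ u] assms
    by (metis insert_commute)
  then have "ones (g(u := g v, v := g u)) ?S = ones g ?S"
    by (cases "u \<in> ?S") (simp_all add: ones_swap_inside finite_comp_minus ones_swap_outside)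
  then show ?thesis by (simp add: diff_edge_ones)
qed

lemma diff_edge_swap_le:
  assumes uv: "{u, v} \<in> E"
  shows "diff_edge V E g h {u, v} \<le> diff_edge V E (g(u := g v, v := g u)) h {u, v} + 1"
proof -
  define g' where "g' = g(u := g v, v := g u)"
  let ?S = "comp_minus V E {u, v} (SOME x. x \<in> {u, v})"
  have "(SOME x. x \<in> {u, v}) \<in> {u, v}" by (rule someI[of _ u]) simp
  then have outside: "u \<notin> ?S \<or> v \<notin> ?S"
    using not_in_branch[OF uv] not_in_branch[of v u] uv by (auto simp: insert_commute)
  have "g'(u := g' v, v := g' u) = g"
    using edge_endpoints(3)[OF uv] by (auto simp: g'_def)
  then have "ones g ?S \<le> ones g' ?S + 1"
    using ones_swap_le[OF finite_comp_minus outside, of g'] by simp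
  moreover have "ones g' ?S \<le> ones g ?S + 1"
    using ones_swap_le[OF finite_comp_minus outside, of g] by (simp add: g'_def)
  ultimately show ?thesis unfolding diff_edge_ones g'_def[symmetric] by linarith
qed

lemma total_diff_adjacent_le:
  assumes "tp_adjacent E g g'"
  shows "total_diff g h \<le> total_diff g' h + 1"
proof -
  obtain u v where uv: "{u, v} \<in> E" and g': "g' = g(u := g v, v := g u)"
    using assms by (rule tp_adjacentE)
  have "total_diff g h = diff_edge V E g h {u, v} + (\<Sum>e\<in>E - {{u, v}}. diff_edge V E g h e)"
    by (rule sum.remove[OF finite_E uv])
  also have "(\<Sum>e\<in>E - {{u, v}}. diff_edge V E g h e) = (\<Sum>e\<in>E - {{u, v}}. diff_edge V E g' h e)"
    using diff_edge_swap_other[OF uv] by (simp add: g')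
  also have "diff_edge V E g h {u, v} \<le> diff_edge V E g' h {u, v} + 1"
    using diff_edge_swap_le[OF uv] by (simp add: g')
  finally show ?thesis by (simp add: sum.remove[OF finite_E uv])
qed

lemma total_diff_less_length: "swap_seq V c E g h fs \<Longrightarrow> total_diff g h < length fs"
proof (induction fs arbitrary: g)
  case Nil
  then show ?case by (simp add: swap_seq_def)
next
  case (Cons g0 fs)
  show ?case
  proof (cases fs)
    case Nil
    then have "g = h" using Cons.prems by (auto simp: swap_seq_def)
    then show ?thesis by (simp add: diff_edge_self)
  next
    case (Cons g' fs')
    then have "tp_adjacent E g g'" and "total_diff g' h < length fs"
      using swap_seq_ConsD[of V c E g h g0 g' fs'] Cons.prems Cons.IH by auto
    then show ?thesis using total_diff_adjacent_le[of g g' h] by simp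
  qed
qed

section \<open>The upper bound\<close>

text \<open>Under \<open>g\<close> the root \<open>y\<close> carries a 1, so the deficit of the branch minus its root,
  i.e. of the union of the child branches, is positive and sits in some child branch.\<close>

lemma deficit_passes_to_child:
  assumes xy: "{x, y} \<in> E" and "g y = 1"
    and deficit: "ones g (branch y x) < ones h (branch y x) + of_bool (h y \<noteq> 1)"
  obtains z where "{y, z} \<in> E" and "z \<noteq> x" and "ones g (branch z y) < ones h (branch z y)"
proof -
  let ?N = "{z. {y, z} \<in> E \<and> z \<noteq> x}"
  have sums: "(\<Sum>z\<in>?N. ones g (branch z y)) < (\<Sum>z\<in>?N. ones h (branch z y))"
    using deficit ones_branch_decomp[OF xy, of g] ones_branch_decomp[OF xy, of h] \<open>g y = 1\<close>
    by (cases "h y = 1") simp_all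
  have "\<exists>z\<in>?N. ones g (branch z y) < ones h (branch z y)"
  proof (rule ccontr)
    assume "\<not> ?thesis"
    then have "(\<Sum>z\<in>?N. ones h (branch z y)) \<le> (\<Sum>z\<in>?N. ones g (branch z y))"
      by (intro sum_mono) (auto simp: not_less)
    then show False using sums by linarith
  qed
  then show thesis using that by blast
qed

lemma exists_deficit_edge:
  assumes g: "token_placement V 2 g" and h: "token_placement V 2 h"
    and same: "ones g V = ones h V" and "g \<noteq> h"
  obtains x y where "{x, y} \<in> E" and "g x = 1" and "ones g (branch y x) < ones h (branch y x)"
proof -
  obtain v where v: "v \<in> V" "g v = 1" "h v \<noteq> 1"
    using exists_misplaced_one[OF finite_V assms] .
  have "2 \<in> g ` V" using g by (simp add: token_placement_def)
  then obtain w where "w \<in> V" "g w = 2" by (metis imageE)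
  then have "v \<noteq> w" using v(2) by auto
  then obtain y where vy: "{v, y} \<in> E" using exists_neighbour v(1) \<open>w \<in> V\<close> by blast
  show thesis
  proof (cases "ones g (branch y v) < ones h (branch y v)")
    case True
    then show thesis using that vy v(2) by blast
  next
    case False
    have yv: "{y, v} \<in> E" using vy by (simp add: insert_commute)
    have "ones g (branch v y) < ones h (branch v y) + of_bool (h v \<noteq> 1)"
      using ones_branch_complement[OF yv, of g] ones_branch_complement[OF yv, of h] same False v(3)
      by simp
    then obtain z where "{v, z} \<in> E" "ones g (branch z v) < ones h (branch z v)"
      using deficit_passes_to_child[of y v g h] yv v(2) by blast
    then show thesis using that v(2) by blast
  qed
qed

lemma exists_improving_edge:
  assumes g: "token_placement V 2 g"
    and "{x, y} \<in> E" and "g x = 1" and "ones g (branch y x) < ones h (branch y x)"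
  shows "\<exists>x' y'. {x', y'} \<in> E \<and> g x' = 1 \<and> g y' = 2 \<and>
    ones g (branch y' x') < ones h (branch y' x')"
  using assms(2-)
proof (induction "card (branch y x)" arbitrary: x y rule: less_induct)
  case less
  note xy = less.prems(1)
  show ?case
  proof (cases "g y = 2")
    case True
    then show ?thesis using less.prems by blast
  next
    case False
    then have "g y = 1"
      using two_colour_values[OF g edge_endpoints(2)[OF xy]] by blast
    have "ones g (branch y x) < ones h (branch y x) + of_bool (h y \<noteq> 1)"
      using less.prems(3) by simp
    then obtain z where yz: "{y, z} \<in> E" "z \<noteq> x"
      and deficit: "ones g (branch z y) < ones h (branch z y)"
      using deficit_passes_to_child[of x y g h] xy \<open>g y = 1\<close> by blast
    have "branch z y \<subseteq> branch y x" by (rule branch_subset[OF xy yz])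
    moreover have "y \<in> branch y x" using in_branch[of y x] xy by (simp add: insert_commute)
    moreover have "y \<notin> branch z y" using not_in_branch[of z y] yz by (simp add: insert_commute)
    ultimately have "branch z y \<subset> branch y x" by blast
    then have "card (branch z y) < card (branch y x)"
      by (rule psubset_card_mono[OF finite_comp_minus])
    then show ?thesis using less.hyps[OF _ yz(1) \<open>g y = 1\<close> deficit] by blast
  qed
qed

lemma improving_swap:
  assumes xy: "{x, y} \<in> E" and "g x = 1" and "g y = 2"
    and deficit: "ones g (branch y x) < ones h (branch y x)" and same: "ones g V = ones h V"
  shows "total_diff (g(x := g y, y := g x)) h < total_diff g h"
proof -
  define g' where "g' = g(x := g y, y := g x)"
  have yx: "{y, x} \<in> E" using xy by (simp add: insert_commute)
  have same': "ones g' V = ones h V"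
    using same ones_swap_inside[OF finite_V edge_endpoints(1,2)[OF xy]] by (simp add: g'_def)
  have "y \<in> branch y x" and "x \<notin> branch y x - {y}"
    using in_branch[OF yx] not_in_branch[OF yx] by auto
  then have "ones g' (branch y x) = ones g (branch y x) + 1"
    using ones_swap_outside[of x "branch y x - {y}" y g] \<open>g x = 1\<close> \<open>g y = 2\<close>
    by (simp add: ones_remove[OF finite_comp_minus, of y] g'_def)
  then have "diff_edge V E g' h {x, y} < diff_edge V E g h {x, y}"
    using deficit diff_edge_branch[OF yx same] diff_edge_branch[OF yx same']
    by (simp add: insert_commute)
  moreover have "(\<Sum>e\<in>E - {{x, y}}. diff_edge V E g' h e) = (\<Sum>e\<in>E - {{x, y}}. diff_edge V E g h e)"
    using diff_edge_swap_other[OF xy] by (simp add: g'_def)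
  ultimately show ?thesis
    by (simp add: sum.remove[OF finite_E xy] g'_def)
qed

lemma exists_improving_neighbour:
  assumes g: "token_placement V 2 g" and h: "token_placement V 2 h"
    and same: "ones g V = ones h V" and "g \<noteq> h"
  obtains g' where "token_placement V 2 g'" and "tp_adjacent E g g'"
    and "ones g' V = ones h V" and "total_diff g' h < total_diff g h"
proof -
  obtain x0 y0 where "{x0, y0} \<in> E" "g x0 = 1" "ones g (branch y0 x0) < ones h (branch y0 x0)"
    using exists_deficit_edge[OF assms] .
  then obtain x y where xy: "{x, y} \<in> E" and "g x = 1" "g y = 2"
    and "ones g (branch y x) < ones h (branch y x)"
    using exists_improving_edge[OF g] by blast
  show thesis
  proof
    show "token_placement V 2 (g(x := g y, y := g x))"
      using token_placement_swap[OF g edge_endpoints(1,2)[OF xy]] .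
    show "tp_adjacent E g (g(x := g y, y := g x))"
      using tp_adjacent_swap[OF xy, of g] \<open>g x = 1\<close> \<open>g y = 2\<close> by simp
    show "ones (g(x := g y, y := g x)) V = ones h V"
      using same ones_swap_inside[OF finite_V edge_endpoints(1,2)[OF xy]] by simp
    show "total_diff (g(x := g y, y := g x)) h < total_diff g h"
      using improving_swap[OF xy] same \<open>g x = 1\<close> \<open>g y = 2\<close> \<open>ones g (branch y x) < _\<close> by blast
  qed
qed

lemma exists_short_swap_seq:
  assumes "token_placement V 2 g" and h: "token_placement V 2 h" and "ones g V = ones h V"
  shows "\<exists>fs. swap_seq V 2 E g h fs \<and> length fs \<le> total_diff g h + 1"
  using assms(1,3)
proof (induction "total_diff g h" arbitrary: g rule: less_induct)
  case less
  show ?case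
  proof (cases "g = h")
    case True
    then show ?thesis using swap_seq_single[OF h] by fastforce
  next
    case False
    then obtain g' where g': "token_placement V 2 g'" and adj: "tp_adjacent E g g'"
      and "ones g' V = ones h V" and decrease: "total_diff g' h < total_diff g h"
      using exists_improving_neighbour[OF less.prems(1) h less.prems(2)] by blast
    then obtain fs where "swap_seq V 2 E g' h fs" and "length fs \<le> total_diff g' h + 1"
      using less.hyps by blast
    then show ?thesis
      using swap_seq_Cons[OF _ adj less.prems(1)] decrease by fastforce
  qed
qed

end

theorem mainTheorem9:
  fixes V :: "'a set" and E :: "'a set set" and f0 ft :: "'a \<Rightarrow> nat"
  assumes "is_tree V E"
    and "token_placement V 2 f0" and "token_placement V 2 ft"
    and "card {v \<in> V. f0 v = 1} = card {v \<in> V. ft v = 1}"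
  shows "OPT V 2 E f0 ft = (\<Sum>e\<in>E. diff_edge V E f0 ft e)"
proof -
  interpret tree_graph V E using assms(1) by unfold_locales
  obtain fs where fs: "swap_seq V 2 E f0 ft fs" and "length fs \<le> total_diff f0 ft + 1"
    using exists_short_swap_seq[OF assms(2,3)] assms(4) unfolding ones_def by blast
  then have "length fs = Suc (total_diff f0 ft)"
    using total_diff_less_length[OF fs] by simp
  then show ?thesis
    using OPT_eqI[OF fs] total_diff_less_length by blast
qed

end
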